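(* Let $m,n$ be positive integers with $2m\le n$ and let $0<\delta,p,q<1$ be real numbers such that $pn$ and $qn$ are integers. Let $S$ and $T$ be uniformly random $pn$- and $qn$-element subsets of $\{1,\ldots,n\}$, respectively, chosen independently. Let $I$ be the set of indices $i\in\{1,\ldots,m\}$ such that $|\{2i-1,2i\}\cap S|=|\{2i-1,2i\}\cap T|=1$. Then \[\mathbb{P}\big[|I|\le(1-\delta)\cdot 4p(1-p)q(1-q)m\big]\le (n+1)^2e^{-\delta^2\cdot 4p(1-p)q(1-q)m/2}.\] *)

theory Defs
  imports "HOL-Probability.Probability"
begin

definition ksubsets :: "nat \<Rightarrow> nat \<Rightarrow> nat set set" where
  "ksubsets n k = {S. S \<subseteq> {1..n} \<and> card S = k}"

definition goodI :: "nat \<Rightarrow> nat set \<Rightarrow> nat set \<Rightarrow> nat set" where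
  "goodI m S T = {i \<in> {1..m}. card ({2*i-1, 2*i} \<inter> S) = 1 \<and> card ({2*i-1, 2*i} \<inter> T) = 1}"

end

theory Submission
  imports Defs
begin

text \<open>Replace the uniform \<open>pn\<close>- and \<open>qn\<close>-subsets by \<open>p\<close>- and \<open>q\<close>-random subsets, in which every
  element is chosen independently. Since \<open>pn\<close> is an integer, it is a mode of the binomial
  distribution, so \<open>(n choose pn) p^pn (1-p)^(n-pn) \<ge> 1/(n+1)\<close>: every point mass of the uniform
  distribution is at most \<open>n + 1\<close> times the corresponding Bernoulli one, which costs the factor
  \<open>(n+1)\<^sup>2\<close>. In the Bernoulli model the pairs \<open>{2i-1, 2i}\<close> are independent and each is good with
  probability \<open>r = 4p(1-p)q(1-q)\<close>, so the exponential moment of \<open>-\<delta>|I|\<close> is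
  \<open>(1 - (1 - e^-\<delta>) r)^m \<le> exp (-(\<delta> - \<delta>\<^sup>2/2) r m)\<close>, and Markov's inequality gives the bound.\<close>

lemma exp_minus_le_quadratic:
  fixes x :: real
  assumes "0 \<le> x"
  shows "exp (- x) \<le> 1 - x + x\<^sup>2 / 2"
proof -
  obtain t where "exp (- x) = (\<Sum>i<3. (- x) ^ i / fact i) + exp t / fact 3 * (- x) ^ 3"
    using Maclaurin_exp_le[of "- x" 3] by blast
  moreover have "exp t / fact 3 * (- x) ^ 3 \<le> 0"
    using assms by (simp add: mult_nonneg_nonneg)
  ultimately show ?thesis by (simp add: numeral_3_eq_3 power2_eq_square)
qed

lemma pmf_binomial_Suc:
  assumes "0 \<le> p" "p \<le> 1" "j < n"
  shows "pmf (binomial_pmf n p) (Suc j) * (real (Suc j) * (1 - p))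
       = pmf (binomial_pmf n p) j * (real (n - j) * p)"
proof -
  have "Suc j * (n choose Suc j) = (n - j) * (n choose j)"
    using times_binomial_minus1_eq[of "Suc j" n] binomial_absorb_comp[of n j] by simp
  then have choose: "real (n choose Suc j) * real (Suc j) = real (n choose j) * real (n - j)"
    by (metis mult.commute of_nat_mult)
  have "(1 - p) ^ (n - j) = (1 - p) * (1 - p) ^ (n - Suc j)"
    using assms(3) by (metis Suc_diff_Suc power_Suc)
  with choose assms(1,2) show ?thesis
    by (simp add: ac_simps)
qed

lemma pmf_binomial_le_mode:
  assumes "0 < p" "p < 1" "real k = p * real n"
  shows "pmf (binomial_pmf n p) j \<le> pmf (binomial_pmf n p) k"
proof -
  let ?b = "pmf (binomial_pmf n p)"
  have "k \<le> n"
    using assms by (metis less_imp_le mult_left_le_one_le of_nat_0_le_iff of_nat_le_iff)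
  have up: "?b i \<le> ?b (Suc i)" if "i < k" for i
  proof -
    have "real (Suc i) * (1 - p) \<le> real (n - i) * p"
      using that \<open>k \<le> n\<close> assms by (simp add: of_nat_diff algebra_simps)
    then have "?b i * (real (Suc i) * (1 - p)) \<le> ?b i * (real (n - i) * p)"
      by (rule mult_left_mono) simp
    also have "\<dots> = ?b (Suc i) * (real (Suc i) * (1 - p))"
      using pmf_binomial_Suc[of p i n] that \<open>k \<le> n\<close> assms by simp
    finally show ?thesis using assms by (simp del: pmf_binomial)
  qed
  have down: "?b (Suc i) \<le> ?b i" if "k \<le> i" "i < n" for i
  proof -
    have "real (n - i) * p \<le> real (Suc i) * (1 - p)"
      using that assms by (simp add: of_nat_diff algebra_simps)
    then have "?b i * (real (n - i) * p) \<le> ?b i * (real (Suc i) * (1 - p))"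
      by (rule mult_left_mono) simp
    then have "?b (Suc i) * (real (Suc i) * (1 - p)) \<le> ?b i * (real (Suc i) * (1 - p))"
      using pmf_binomial_Suc[of p i n] that assms by (simp del: pmf_binomial)
    then show ?thesis using assms by (simp del: pmf_binomial)
  qed
  consider "j \<le> k" | "k \<le> j" "j \<le> n" | "n < j" by linarith
  then show ?thesis
  proof cases
    case 1
    then show ?thesis by (induction j rule: inc_induct) (use up order_trans in blast)+
  next
    case 2
    then show ?thesis by (induction j rule: dec_induct) (simp, meson down order_trans Suc_leD Suc_le_eq)
  next
    case 3
    then show ?thesis using assms by (simp add: binomial_eq_0)
  qed
qed

lemma pmf_binomial_mode_ge:
  assumes "0 < p" "p < 1" "real k = p * real n"
  shows "1 \<le> (real n + 1) * pmf (binomial_pmf n p) k"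
proof -
  have "1 = (\<Sum>j\<le>n. pmf (binomial_pmf n p) j)"
    using sum_pmf_eq_1[of "{..n}" "binomial_pmf n p"] assms by simp
  also have "\<dots> \<le> (\<Sum>j\<le>n. pmf (binomial_pmf n p) k)"
    by (intro sum_mono pmf_binomial_le_mode[OF assms])
  also have "\<dots> = (real n + 1) * pmf (binomial_pmf n p) k" by simp
  finally show ?thesis .
qed

text \<open>The probability that the \<open>p\<close>-random subset of \<open>A\<close> equals \<open>S\<close>, for \<open>S \<subseteq> A\<close>.\<close>

definition bernoulli_weight :: "'a set \<Rightarrow> real \<Rightarrow> 'a set \<Rightarrow> real" where
  "bernoulli_weight A p S = (\<Prod>x\<in>A. if x \<in> S then p else 1 - p)"

lemma bernoulli_weight_nonneg: "0 \<le> p \<Longrightarrow> p \<le> 1 \<Longrightarrow> 0 \<le> bernoulli_weight A p S"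
  unfolding bernoulli_weight_def by (intro prod_nonneg) auto

lemma bernoulli_weight_eq:
  assumes "finite A" "S \<subseteq> A"
  shows "bernoulli_weight A p S = p ^ card S * (1 - p) ^ (card A - card S)"
proof -
  have "A \<inter> {x. x \<in> S} = S" "A \<inter> - {x. x \<in> S} = A - S"
    using assms(2) by auto
  then show ?thesis
    using assms unfolding bernoulli_weight_def prod.If_cases[OF assms(1)]
    by (simp add: card_Diff_subset finite_subset)
qed

lemma sum_bernoulli_weight:
  assumes "finite A"
  shows "(\<Sum>S\<in>Pow A. bernoulli_weight A p S) = 1"
proof -
  have "(1::real) = (\<Prod>x\<in>A. p + (1 - p))" by simp
  also have "\<dots> = (\<Sum>S\<in>Pow A. (\<Prod>x\<in>S. p) * (\<Prod>x\<in>A - S. 1 - p))"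
    by (rule prod_add[OF assms])
  also have "\<dots> = (\<Sum>S\<in>Pow A. bernoulli_weight A p S)"
  proof (rule sum.cong[OF refl])
    fix S assume "S \<in> Pow A"
    then have "A \<inter> {x. x \<in> S} = S" "A \<inter> - {x. x \<in> S} = A - S" by auto
    then show "(\<Prod>x\<in>S. p) * (\<Prod>x\<in>A - S. 1 - p) = bernoulli_weight A p S"
      unfolding bernoulli_weight_def prod.If_cases[OF assms] by simp
  qed
  finally show ?thesis by simp
qed

lemma bernoulli_weight_Un:
  assumes "finite A" "finite B" "A \<inter> B = {}" "U \<subseteq> A" "V \<subseteq> B"
  shows "bernoulli_weight (A \<union> B) p (U \<union> V) = bernoulli_weight A p U * bernoulli_weight B p V"
proof -
  have "bernoulli_weight (A \<union> B) p (U \<union> V)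
      = (\<Prod>x\<in>A. if x \<in> U \<union> V then p else 1 - p) * (\<Prod>x\<in>B. if x \<in> U \<union> V then p else 1 - p)"
    unfolding bernoulli_weight_def by (rule prod.union_disjoint[OF assms(1-3)])
  also have "\<dots> = bernoulli_weight A p U * bernoulli_weight B p V"
    unfolding bernoulli_weight_def using assms by (intro arg_cong2[where f = "(*)"] prod.cong) auto
  finally show ?thesis .
qed

lemma sum_Pow_Un_disjoint:
  assumes "A \<inter> B = {}"
  shows "(\<Sum>S\<in>Pow (A \<union> B). f S) = (\<Sum>U\<in>Pow A. \<Sum>V\<in>Pow B. f (U \<union> V))"
proof -
  have "(\<Sum>(U, V)\<in>Pow A \<times> Pow B. f (U \<union> V)) = (\<Sum>S\<in>Pow (A \<union> B). f S)"
    by (rule sum.reindex_bij_witness[of _ "\<lambda>S. (S \<inter> A, S \<inter> B)" "\<lambda>(U, V). U \<union> V"])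
       (use assms in auto)
  then show ?thesis by (simp add: sum.cartesian_product)
qed

lemma sum_bernoulli_weight_prod_blocks:
  assumes "finite J" "finite A" "\<And>i. i \<in> J \<Longrightarrow> B i \<subseteq> A" "disjoint_family_on B J"
  shows "(\<Sum>S\<in>Pow A. bernoulli_weight A p S * (\<Prod>i\<in>J. f i (S \<inter> B i)))
       = (\<Prod>i\<in>J. \<Sum>U\<in>Pow (B i). bernoulli_weight (B i) p U * f i U)"
  using assms
proof (induction J arbitrary: A rule: finite_induct)
  case empty
  then show ?case by (simp add: sum_bernoulli_weight)
next
  case (insert i J)
  define C where "C = A - B i"
  have A: "A = B i \<union> C" and disj: "B i \<inter> C = {}"
    using insert.prems(2) unfolding C_def by auto
  have fin: "finite (B i)" "finite C"
    using insert.prems(1,2) unfolding C_def by (auto intro: finite_subset)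
  have BC: "B j \<subseteq> C" if "j \<in> J" for j
  proof -
    have "B j \<inter> B i = {}"
      using insert.prems(3) insert.hyps(2) that unfolding disjoint_family_on_def by fastforce
    then show ?thesis using insert.prems(2) that unfolding C_def by auto
  qed
  have IH: "(\<Sum>V\<in>Pow C. bernoulli_weight C p V * (\<Prod>j\<in>J. f j (V \<inter> B j)))
      = (\<Prod>j\<in>J. \<Sum>U\<in>Pow (B j). bernoulli_weight (B j) p U * f j U)"
    using insert.prems by (intro insert.IH fin BC) (auto simp: disjoint_family_on_def)
  have factor: "bernoulli_weight (B i \<union> C) p (U \<union> V) * (\<Prod>j\<in>insert i J. f j ((U \<union> V) \<inter> B j))
      = (bernoulli_weight (B i) p U * f i U) * (bernoulli_weight C p V * (\<Prod>j\<in>J. f j (V \<inter> B j)))"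
    if "U \<subseteq> B i" "V \<subseteq> C" for U V
  proof -
    have "(U \<union> V) \<inter> B i = U" using that disj by auto
    moreover have "(U \<union> V) \<inter> B j = V \<inter> B j" if "j \<in> J" for j
      using BC[OF that] \<open>U \<subseteq> B i\<close> disj by auto
    ultimately show ?thesis
      using bernoulli_weight_Un[OF fin disj that] insert.hyps by (simp add: ac_simps)
  qed
  have "(\<Sum>S\<in>Pow A. bernoulli_weight A p S * (\<Prod>j\<in>insert i J. f j (S \<inter> B j)))
      = (\<Sum>U\<in>Pow (B i). \<Sum>V\<in>Pow C. (bernoulli_weight (B i) p U * f i U)
           * (bernoulli_weight C p V * (\<Prod>j\<in>J. f j (V \<inter> B j))))"
    unfolding A sum_Pow_Un_disjoint[OF disj] by (intro sum.cong refl factor) auto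
  also have "\<dots> = (\<Sum>U\<in>Pow (B i). bernoulli_weight (B i) p U * f i U)
      * (\<Sum>V\<in>Pow C. bernoulli_weight C p V * (\<Prod>j\<in>J. f j (V \<inter> B j)))"
    by (simp add: sum_product)
  finally show ?case
    using IH insert.hyps by simp
qed

text \<open>The integrand is \<open>1 - (1 - e^-t)\<close> on good pairs and \<open>1\<close> otherwise, and a pair is good with
  probability \<open>2p(1-p) \<cdot> 2q(1-q)\<close>.\<close>

lemma pair_block_exp_moment:
  assumes "a \<noteq> b"
  shows "(\<Sum>U\<in>Pow {a, b}. bernoulli_weight {a, b} p U *
           (\<Sum>V\<in>Pow {a, b}. bernoulli_weight {a, b} q V *
              exp (- t * (if card U = 1 \<and> card V = 1 then 1 else 0))))
       = 1 - (1 - exp (- t)) * (4 * p * (1 - p) * q * (1 - q))"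
proof -
  have "Pow {a, b} = {{}, {a}, {b}, {a, b}}" by blast
  then show ?thesis using assms by (simp add: bernoulli_weight_def algebra_simps)
qed

lemma exp_card_goodI:
  "exp (- t * real (card (goodI m S T)))
   = (\<Prod>i\<in>{1..m}. exp (- t * (if card (S \<inter> {2*i-1, 2*i}) = 1 \<and> card (T \<inter> {2*i-1, 2*i}) = 1
                                 then 1 else 0)))"
proof -
  have "real (card (goodI m S T))
      = (\<Sum>i\<in>{1..m}. if card ({2*i-1, 2*i} \<inter> S) = 1 \<and> card ({2*i-1, 2*i} \<inter> T) = 1 then 1 else 0)"
    unfolding goodI_def by (simp add: sum.If_cases Int_def)
  then show ?thesis by (simp add: sum_distrib_left exp_sum Int_commute)
qed

lemma exp_moment_goodI:
  assumes "2 * m \<le> n"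
  shows "(\<Sum>(S, T)\<in>Pow {1..n} \<times> Pow {1..n}. bernoulli_weight {1..n} p S * bernoulli_weight {1..n} q T
            * exp (- t * real (card (goodI m S T))))
       = (1 - (1 - exp (- t)) * (4 * p * (1 - p) * q * (1 - q))) ^ m"
proof -
  define B where "B i = {2*i-1, 2*i}" for i :: nat
  define h where "h U V = exp (- t * (if card U = 1 \<and> card V = 1 then 1 else 0))" for U V :: "nat set"
  have blocks: "\<And>i. i \<in> {1..m} \<Longrightarrow> B i \<subseteq> {1..n}" "disjoint_family_on B {1..m}"
    using assms unfolding B_def disjoint_family_on_def by auto
  have "(\<Sum>(S, T)\<in>Pow {1..n} \<times> Pow {1..n}. bernoulli_weight {1..n} p S * bernoulli_weight {1..n} q T
            * exp (- t * real (card (goodI m S T))))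
      = (\<Sum>S\<in>Pow {1..n}. bernoulli_weight {1..n} p S *
           (\<Sum>T\<in>Pow {1..n}. bernoulli_weight {1..n} q T * (\<Prod>i\<in>{1..m}. h (S \<inter> B i) (T \<inter> B i))))"
    unfolding exp_card_goodI h_def B_def by (simp add: sum.cartesian_product sum_distrib_left ac_simps)
  also have "\<dots> = (\<Sum>S\<in>Pow {1..n}. bernoulli_weight {1..n} p S *
           (\<Prod>i\<in>{1..m}. \<Sum>V\<in>Pow (B i). bernoulli_weight (B i) q V * h (S \<inter> B i) V))"
    by (intro sum.cong refl arg_cong2[where f = "(*)"] sum_bernoulli_weight_prod_blocks blocks) auto
  also have "\<dots> = (\<Prod>i\<in>{1..m}. \<Sum>U\<in>Pow (B i). bernoulli_weight (B i) p U *
           (\<Sum>V\<in>Pow (B i). bernoulli_weight (B i) q V * h U V))"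
    by (intro sum_bernoulli_weight_prod_blocks blocks) auto
  also have "\<dots> = (\<Prod>i\<in>{1..m}. 1 - (1 - exp (- t)) * (4 * p * (1 - p) * q * (1 - q)))"
    by (intro prod.cong refl) (unfold B_def h_def, intro pair_block_exp_moment, auto)
  finally show ?thesis by simp
qed

lemma card_ksubsets: "card (ksubsets n k) = n choose k"
  unfolding ksubsets_def using n_subsets[of "{1..n}" k] by simp

lemma ksubsets_subset_Pow: "ksubsets n k \<subseteq> Pow {1..n}"
  unfolding ksubsets_def by auto

lemma ksubsets_ne_empty:
  assumes "0 \<le> p" "p \<le> 1" "real k = p * real n"
  shows "ksubsets n k \<noteq> {}"
proof -
  have "k \<le> n"
    using assms by (metis mult_left_le_one_le of_nat_0_le_iff of_nat_le_iff)
  then have "card (ksubsets n k) \<noteq> 0" by (simp add: card_ksubsets)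
  then show ?thesis by auto
qed

lemma inverse_card_ksubsets_le:
  assumes "0 < p" "p < 1" "real k = p * real n" "S \<in> ksubsets n k"
  shows "1 / real (card (ksubsets n k)) \<le> (real n + 1) * bernoulli_weight {1..n} p S"
proof -
  have "bernoulli_weight {1..n} p S = p ^ k * (1 - p) ^ (n - k)"
    using assms(4) by (simp add: ksubsets_def bernoulli_weight_eq)
  then have "real (card (ksubsets n k)) * bernoulli_weight {1..n} p S = pmf (binomial_pmf n p) k"
    using assms(1,2) by (simp add: card_ksubsets)
  moreover have "1 \<le> (real n + 1) * pmf (binomial_pmf n p) k"
    using assms(1-3) by (rule pmf_binomial_mode_ge)
  moreover have "0 < card (ksubsets n k)"
    using assms(4) finite_subset[OF ksubsets_subset_Pow] by (auto simp: card_gt_0_iff)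
  ultimately show ?thesis by (simp add: divide_le_eq ac_simps)
qed

lemma prob_pair_pmf_of_set_le:
  assumes "finite X" "finite Y" "K \<subseteq> X" "L \<subseteq> Y" "K \<noteq> {}" "L \<noteq> {}"
    and "\<And>S. S \<in> K \<Longrightarrow> 1 / real (card K) \<le> w S" "\<And>T. T \<in> L \<Longrightarrow> 1 / real (card L) \<le> v T"
    and "\<And>S. S \<in> X \<Longrightarrow> 0 \<le> w S" "\<And>T. T \<in> Y \<Longrightarrow> 0 \<le> v T"
  shows "measure_pmf.prob (pair_pmf (pmf_of_set K) (pmf_of_set L)) E \<le> (\<Sum>(S, T)\<in>(X \<times> Y) \<inter> E. w S * v T)"
proof -
  let ?M = "pair_pmf (pmf_of_set K) (pmf_of_set L)"
  have fin: "finite K" "finite L"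
    using assms(1-4) by (auto intro: finite_subset)
  have bound: "1 / (real (card K) * real (card L)) \<le> w S * v T" if "S \<in> K" "T \<in> L" for S T
    using mult_mono[OF assms(7)[OF that(1)] assms(8)[OF that(2)]] assms(3,4,9) that by auto
  have "measure_pmf.prob ?M E = measure_pmf.prob ?M ((K \<times> L) \<inter> E)"
    using measure_Int_set_pmf[of ?M E] fin assms(5,6) by (simp add: Int_commute)
  also have "\<dots> = (\<Sum>x\<in>(K \<times> L) \<inter> E. pmf ?M x)"
    using fin by (intro measure_measure_pmf_finite) auto
  also have "\<dots> = (\<Sum>(S, T)\<in>(K \<times> L) \<inter> E. 1 / (real (card K) * real (card L)))"
    using fin by (intro sum.cong refl) (auto simp: pmf_pair assms(5,6))
  also have "\<dots> \<le> (\<Sum>(S, T)\<in>(K \<times> L) \<inter> E. w S * v T)"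
    by (intro sum_mono) (auto intro: bound)
  also have "\<dots> \<le> (\<Sum>(S, T)\<in>(X \<times> Y) \<inter> E. w S * v T)"
    using assms(1-4,9,10) by (intro sum_mono2) auto
  finally show ?thesis .
qed

lemma prob_ksubsets_le_bernoulli:
  assumes "0 < p" "p < 1" "0 < q" "q < 1" "real k = p * real n" "real l = q * real n"
  shows "measure_pmf.prob (pair_pmf (pmf_of_set (ksubsets n k)) (pmf_of_set (ksubsets n l))) E
     \<le> (real n + 1)^2 * (\<Sum>(S, T)\<in>(Pow {1..n} \<times> Pow {1..n}) \<inter> E.
                            bernoulli_weight {1..n} p S * bernoulli_weight {1..n} q T)"
proof -
  have "measure_pmf.prob (pair_pmf (pmf_of_set (ksubsets n k)) (pmf_of_set (ksubsets n l))) E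
     \<le> (\<Sum>(S, T)\<in>(Pow {1..n} \<times> Pow {1..n}) \<inter> E.
          ((real n + 1) * bernoulli_weight {1..n} p S) * ((real n + 1) * bernoulli_weight {1..n} q T))"
    using ksubsets_ne_empty[of p k n] ksubsets_ne_empty[of q l n] assms
    by (intro prob_pair_pmf_of_set_le ksubsets_subset_Pow
          inverse_card_ksubsets_le[OF assms(1,2,5)] inverse_card_ksubsets_le[OF assms(3,4,6)])
       (auto intro!: mult_nonneg_nonneg bernoulli_weight_nonneg)
  then show ?thesis
    by (simp add: sum_distrib_left case_prod_unfold power2_eq_square ac_simps)
qed

lemma sum_le_exp_moment:
  fixes w g :: "'a \<Rightarrow> 'b \<Rightarrow> real"
  assumes "finite F" "\<And>S T. (S, T) \<in> F \<Longrightarrow> 0 \<le> w S T" "0 \<le> t"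
  shows "(\<Sum>(S, T)\<in>F \<inter> {(S, T). g S T \<le> a}. w S T)
       \<le> exp (t * a) * (\<Sum>(S, T)\<in>F. w S T * exp (- t * g S T))"
proof -
  have "(\<Sum>(S, T)\<in>F \<inter> {(S, T). g S T \<le> a}. w S T)
      \<le> (\<Sum>(S, T)\<in>F \<inter> {(S, T). g S T \<le> a}. w S T * exp (t * a - t * g S T))"
  proof (intro sum_mono, clarify)
    fix S T assume "(S, T) \<in> F" "g S T \<le> a"
    then have "w S T * 1 \<le> w S T * exp (t * a - t * g S T)"
      using assms(2,3) by (intro mult_left_mono) (auto simp: mult_left_mono)
    then show "w S T \<le> w S T * exp (t * a - t * g S T)" by simp
  qed
  also have "\<dots> \<le> (\<Sum>(S, T)\<in>F. w S T * exp (t * a - t * g S T))"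
    using assms by (intro sum_mono2) auto
  also have "\<dots> = exp (t * a) * (\<Sum>(S, T)\<in>F. w S T * exp (- t * g S T))"
    by (simp add: sum_distrib_left case_prod_unfold exp_diff exp_minus field_simps)
  finally show ?thesis .
qed

lemma lower_tail_exponent_le:
  fixes \<delta> r :: real
  assumes "0 \<le> \<delta>" "0 \<le> r" "r \<le> 1"
  shows "exp (\<delta> * ((1 - \<delta>) * (r * real m))) * (1 - (1 - exp (- \<delta>)) * r) ^ m
       \<le> exp (- (\<delta>\<^sup>2 * (r * real m) / 2))"
proof -
  define c where "c = 1 - exp (- \<delta>)"
  have "0 \<le> c" "c \<le> 1"
    using assms(1) unfolding c_def by auto
  then have "(1 - c * r) ^ m \<le> exp (- (c * r)) ^ m"
    using assms(2,3) exp_ge_add_one_self[of "- (c * r)"]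
    by (intro power_mono) (auto intro: mult_le_one)
  also have "\<dots> = exp (- (c * (r * real m)))"
    by (simp add: exp_of_nat_mult[symmetric] ac_simps)
  finally have "exp (\<delta> * ((1 - \<delta>) * (r * real m))) * (1 - c * r) ^ m
      \<le> exp (\<delta> * ((1 - \<delta>) * (r * real m))) * exp (- (c * (r * real m)))"
    by (rule mult_left_mono) simp
  also have "\<dots> = exp ((\<delta> * (1 - \<delta>) - c) * (r * real m))"
    by (simp add: exp_add[symmetric] algebra_simps)
  also have "\<dots> \<le> exp (- (\<delta>\<^sup>2 / 2) * (r * real m))"
  proof -
    have "\<delta> * (1 - \<delta>) - c \<le> - (\<delta>\<^sup>2 / 2)"
      using exp_minus_le_quadratic[OF assms(1)] by (simp add: c_def power2_eq_square algebra_simps)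
    then have "(\<delta> * (1 - \<delta>) - c) * (r * real m) \<le> - (\<delta>\<^sup>2 / 2) * (r * real m)"
      by (rule mult_right_mono) (simp add: assms(2))
    then show ?thesis by simp
  qed
  finally show ?thesis
    unfolding c_def by simp
qed

theorem proposition2p3:
  fixes m n k l :: nat and \<delta> p q :: real
  assumes "m > 0" "n > 0" "2 * m \<le> n"
    and "0 < \<delta>" "\<delta> < 1" "0 < p" "p < 1" "0 < q" "q < 1"
    and "real k = p * real n" "real l = q * real n"
  shows "measure_pmf.prob (pair_pmf (pmf_of_set (ksubsets n k)) (pmf_of_set (ksubsets n l)))
           {(S, T). real (card (goodI m S T)) \<le> (1 - \<delta>) * (4 * p * (1 - p) * q * (1 - q) * real m)}
         \<le> (real n + 1)^2 * exp (- (\<delta>^2 * (4 * p * (1 - p) * q * (1 - q) * real m) / 2))"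
proof -
  let ?r = "4 * p * (1 - p) * q * (1 - q)"
  let ?E = "{(S, T). real (card (goodI m S T)) \<le> (1 - \<delta>) * (?r * real m)}"
  let ?w = "\<lambda>S T. bernoulli_weight {1..n} p S * bernoulli_weight {1..n} q T"
  have r: "0 \<le> ?r" "?r \<le> 1"
  proof -
    have "0 \<le> (2 * p - 1)\<^sup>2" "0 \<le> (2 * q - 1)\<^sup>2" by simp_all
    then have "p * (1 - p) \<le> 1 / 4" "q * (1 - q) \<le> 1 / 4"
      by (simp_all add: power2_eq_square algebra_simps)
    then have "(p * (1 - p)) * (q * (1 - q)) \<le> 1 / 4 * (1 / 4)"
      using assms(6-9) by (intro mult_mono) auto
    then show "?r \<le> 1"
      by (simp add: algebra_simps)
    show "0 \<le> ?r"
      using assms(6-9) by simp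
  qed
  have "measure_pmf.prob (pair_pmf (pmf_of_set (ksubsets n k)) (pmf_of_set (ksubsets n l))) ?E
      \<le> (real n + 1)^2 * (\<Sum>(S, T)\<in>(Pow {1..n} \<times> Pow {1..n}) \<inter> ?E. ?w S T)"
    using assms(6-11) by (rule prob_ksubsets_le_bernoulli)
  also have "\<dots> \<le> (real n + 1)^2 * (exp (\<delta> * ((1 - \<delta>) * (?r * real m)))
      * (\<Sum>(S, T)\<in>Pow {1..n} \<times> Pow {1..n}. ?w S T * exp (- \<delta> * real (card (goodI m S T)))))"
    using assms(4,6-9)
    by (intro mult_left_mono sum_le_exp_moment) (auto intro!: mult_nonneg_nonneg bernoulli_weight_nonneg)
  also have "\<dots> = (real n + 1)^2 * (exp (\<delta> * ((1 - \<delta>) * (?r * real m))) * (1 - (1 - exp (- \<delta>)) * ?r) ^ m)"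
    using exp_moment_goodI[OF assms(3), of p q \<delta>] by simp
  also have "\<dots> \<le> (real n + 1)^2 * exp (- (\<delta>^2 * (?r * real m) / 2))"
    using assms(4) r by (intro mult_left_mono lower_tail_exponent_le) auto
  finally show ?thesis by simp
qed

end
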